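(* Let $A$ be a finite dimensional Hopf algebra over a field $k$ and let $M,L,N,P$ be Hopf bimodules over $A$. Let $f$ be a $p$-cocycle from $M$ to $L$, $g$ a $q$-cocycle from $L$ to $N$, and $h$ a $0$-cocycle from $N$ to $P$ (i.e. $h\in\mathrm{Hom}_{A-}^{-A}(N,P)$ with $Dh=0$) in the Hopf bimodule cohomology complexes. Then $(f\smile g)\smile h=f\smile(g\smile h)$.
   Context: $A$ is a finite dimensional Hopf algebra over a field $k$, with comultiplication $\Delta(x)=\sum x^{(1)}\otimes x^{(2)}$ and counit $\varepsilon$; $\Delta^{(u)}:A\to A^{\otimes u+1}$ is $\varepsilon$ for $u=-1$, the identity for $u=0$, and the iterated comultiplication otherwise. A Hopf bimodule is an $A$-bimodule and $A$-bicomodule (coactions $m\mapsto\sum m_{(-1)}\otimes m_{(0)}$, $m\mapsto\sum m_{(0)}\otimes m_{(1)}$) whose coactions are bimodule maps. For Hopf bimodules $M,N$, $\mathrm{Hom}_{A-}^{-A}(M\otimes A^{\otimes q},A^{\otimes p}\otimes N)$ denotes left $A$-module, right $A$-comodule maps, where $M\otimes A^{\otimes q}$ has the left action on $M$ and right coaction $m\otimes a_1\otimes\cdots\otimes a_q\mapsto\sum m_{(0)}\otimes a_1^{(1)}\otimes\cdots\otimes a_q^{(1)}\otimes m_{(1)}a_1^{(2)}\cdots a_q^{(2)}$, and $A^{\otimes p}\otimes N$ has diagonal left action and the right coaction of $N$. An $n$-cochain from $M$ to $N$ is an element of $\bigoplus_{t=0}^n\mathrm{Hom}_{A-}^{-A}(M\otimes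 A^{\otimes n-t},A^{\otimes t}\otimes N)$; cocycles are with respect to the total differential $D=d_h+d_c$ with $d_h\alpha(m\otimes a_1\otimes\cdots\otimes a_{q+1})=\alpha(ma_1\otimes\cdots\otimes a_{q+1})+\sum_{i=1}^q(-1)^i\alpha(m\otimes\cdots\otimes a_ia_{i+1}\otimes\cdots)+(-1)^{q+1}\alpha(m\otimes a_1\otimes\cdots\otimes a_q)a_{q+1}$ (diagonal right action on $A^{\otimes p}\otimes N$) and $d_c\alpha=(-1)^q[(\mathrm{id}_A\otimes\alpha)\circ\delta_L+\sum_{i=1}^p(-1)^i\Delta_i\circ\alpha+(-1)^{p+1}(\mathrm{id}_{A^{\otimes p}}\otimes\delta_L^N)\circ\alpha]$ (with $\delta_L(m\otimes a_1\otimes\cdots\otimes a_q)=\sum m_{(-1)}a_1^{(1)}\cdots a_q^{(1)}\otimes m_{(0)}\otimes a_1^{(2)}\otimes\cdots\otimes a_q^{(2)}$ and $\Delta_i$ applying $\Delta$ to the $i$-th factor). Cup product: for $f\in\mathrm{Hom}_{A-}^{-A}(M\otimes A^{\otimes p-s},A^{\otimes s}\otimes L)$ and $g\in\mathrm{Hom}_{A-}^{-A}(L\otimes A^{\otimes q-r},A^{\otimes r}\otimes N)$, with $n=p+q$, $t=s+r$, $(f\smile g)(m\otimes a_1\otimes\cdots\otimes a_{n-t})=\sum(-1)^{s(q-r)}(\mathrm{id}_{A^{\otimes s}}\otimes g)\big[f(m\otimes a_1\otimes\cdots\otimes a_{p-s})\cdot(\Delta^{(s-1)}(a^{(1)}_{p-s+1}\cdots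 a^{(1)}_{n-t})\otimes1)\otimes a^{(2)}_{p-s+1}\otimes\cdots\otimes a^{(2)}_{n-t}\big]$, where the $A^{\otimes s}$ factors are multiplied on the right componentwise; extended bilinearly to cochains. *)

theory Defs
  imports Main "HOL.Vector_Spaces"
begin

text \<open>The finite dimensional Hopf algebra A over the field 'k is given
by a basis b_0, ..., b_(d-1) (d = hdim H) and structure constants:
  b_i b_j = sum_k hmu i j k b_k,  1 = sum_k heta k b_k,
  Delta b_i = sum_(j,k) hcmu i j k b_j (x) b_k,  eps b_i = heps i,  S b_i = sum_l hS i l b_l.
A Hopf bimodule M is a 'k-vector space (type 'm, scalar multiplication hb_sc) with
  hb_la i m = b_i . m,  hb_ra m i = m . b_i,
  delta_L m = sum_i b_i (x) hb_lc m i,  delta_R m = sum_i hb_rc m i (x) b_i.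
An element of A^(x)p (x) N is a function X :: nat list => 'n, meaning
sum_es b_es (x) X es  (es ranging over index lists of length p with entries < d),
where b_es = b_(es!0) (x) ... (x) b_(es!(p-1)).
An n-cochain from M to N is a function phi :: 'm => nat list => nat list => 'n,
where phi m as es (length as + length es = n) is the coefficient of b_es in
phi(m (x) b_as); its component in Hom(M (x) A^(x)(n-t), A^(x)t (x) N) is the part with
length es = t.\<close>

record 'k hopf =
  hdim :: nat
  hmu :: "nat \<Rightarrow> nat \<Rightarrow> nat \<Rightarrow> 'k"
  heta :: "nat \<Rightarrow> 'k"
  hcmu :: "nat \<Rightarrow> nat \<Rightarrow> nat \<Rightarrow> 'k"
  heps :: "nat \<Rightarrow> 'k"
  hS :: "nat \<Rightarrow> nat \<Rightarrow> 'k"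

record ('k, 'm) hbimod =
  hb_sc :: "'k \<Rightarrow> 'm \<Rightarrow> 'm"
  hb_la :: "nat \<Rightarrow> 'm \<Rightarrow> 'm"
  hb_ra :: "'m \<Rightarrow> nat \<Rightarrow> 'm"
  hb_lc :: "'m \<Rightarrow> nat \<Rightarrow> 'm"
  hb_rc :: "'m \<Rightarrow> nat \<Rightarrow> 'm"

definition kdelta :: "nat \<Rightarrow> nat \<Rightarrow> 'k::field" where
  "kdelta i j = (if i = j then 1 else 0)"

definition is_hopf :: "'k::field hopf \<Rightarrow> bool" where
  "is_hopf H \<longleftrightarrow>
    (let d = hdim H; \<mu> = hmu H; \<eta> = heta H; \<Delta> = hcmu H; \<epsilon> = heps H; S = hS H in
     (\<forall>i<d. \<forall>j<d. \<forall>l<d. \<forall>t<d. (\<Sum>k<d. \<mu> i j k * \<mu> k l t) = (\<Sum>k<d. \<mu> j l k * \<mu> i k t))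
   \<and> (\<forall>i<d. \<forall>t<d. (\<Sum>k<d. \<eta> k * \<mu> k i t) = kdelta i t \<and> (\<Sum>k<d. \<eta> k * \<mu> i k t) = kdelta i t)
   \<and> (\<forall>i<d. \<forall>a<d. \<forall>b<d. \<forall>c<d. (\<Sum>j<d. \<Delta> i j c * \<Delta> j a b) = (\<Sum>k<d. \<Delta> i a k * \<Delta> k b c))
   \<and> (\<forall>i<d. \<forall>j<d. (\<Sum>k<d. \<Delta> i k j * \<epsilon> k) = kdelta i j \<and> (\<Sum>k<d. \<Delta> i j k * \<epsilon> k) = kdelta i j)
   \<and> (\<forall>i<d. \<forall>j<d. \<forall>a<d. \<forall>b<d. (\<Sum>k<d. \<mu> i j k * \<Delta> k a b) =
        (\<Sum>a1<d. \<Sum>b1<d. \<Sum>a2<d. \<Sum>b2<d. \<Delta> i a1 b1 * \<Delta> j a2 b2 * \<mu> a1 a2 a * \<mu> b1 b2 b))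
   \<and> (\<forall>a<d. \<forall>b<d. (\<Sum>k<d. \<eta> k * \<Delta> k a b) = \<eta> a * \<eta> b)
   \<and> (\<forall>i<d. \<forall>j<d. (\<Sum>k<d. \<mu> i j k * \<epsilon> k) = \<epsilon> i * \<epsilon> j)
   \<and> (\<Sum>k<d. \<eta> k * \<epsilon> k) = 1
   \<and> (\<forall>i<d. \<forall>t<d. (\<Sum>j<d. \<Sum>k<d. \<Sum>l<d. \<Delta> i j k * S j l * \<mu> l k t) = \<epsilon> i * \<eta> t
                 \<and> (\<Sum>j<d. \<Sum>k<d. \<Sum>l<d. \<Delta> i j k * S k l * \<mu> j l t) = \<epsilon> i * \<eta> t))"

definition klin :: "('k \<Rightarrow> 'a::ab_group_add \<Rightarrow> 'a) \<Rightarrow> ('k \<Rightarrow> 'b::ab_group_add \<Rightarrow> 'b) \<Rightarrow> ('a \<Rightarrow> 'b) \<Rightarrow> bool" where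
  "klin sa sb F \<longleftrightarrow> (\<forall>x y. F (x + y) = F x + F y) \<and> (\<forall>c x. F (sa c x) = sb c (F x))"

definition is_hbimod :: "'k::field hopf \<Rightarrow> ('k, 'm::ab_group_add) hbimod \<Rightarrow> bool" where
  "is_hbimod H M \<longleftrightarrow>
    (let d = hdim H; \<mu> = hmu H; \<eta> = heta H; \<Delta> = hcmu H; \<epsilon> = heps H;
         sc = hb_sc M; la = hb_la M; ra = hb_ra M; lc = hb_lc M; rc = hb_rc M in
     vector_space sc
   \<and> (\<forall>i<d. klin sc sc (la i) \<and> klin sc sc (\<lambda>m. ra m i) \<and> klin sc sc (\<lambda>m. lc m i) \<and> klin sc sc (\<lambda>m. rc m i))
   \<comment> \<open>bimodule\<close>
   \<and> (\<forall>i<d. \<forall>j<d. \<forall>m. la i (la j m) = (\<Sum>k<d. sc (\<mu> i j k) (la k m)))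
   \<and> (\<forall>m. (\<Sum>k<d. sc (\<eta> k) (la k m)) = m)
   \<and> (\<forall>i<d. \<forall>j<d. \<forall>m. ra (ra m i) j = (\<Sum>k<d. sc (\<mu> i j k) (ra m k)))
   \<and> (\<forall>m. (\<Sum>k<d. sc (\<eta> k) (ra m k)) = m)
   \<and> (\<forall>i<d. \<forall>j<d. \<forall>m. ra (la i m) j = la i (ra m j))
   \<comment> \<open>bicomodule\<close>
   \<and> (\<forall>i<d. \<forall>j<d. \<forall>m. lc (lc m i) j = (\<Sum>k<d. sc (\<Delta> k i j) (lc m k)))
   \<and> (\<forall>m. (\<Sum>i<d. sc (\<epsilon> i) (lc m i)) = m)
   \<and> (\<forall>i<d. \<forall>j<d. \<forall>m. rc (rc m i) j = (\<Sum>k<d. sc (\<Delta> k j i) (rc m k)))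
   \<and> (\<forall>m. (\<Sum>i<d. sc (\<epsilon> i) (rc m i)) = m)
   \<and> (\<forall>i<d. \<forall>j<d. \<forall>m. lc (rc m i) j = rc (lc m j) i)
   \<comment> \<open>coactions are bimodule maps\<close>
   \<and> (\<forall>i<d. \<forall>t<d. \<forall>m. lc (la i m) t = (\<Sum>j<d. \<Sum>k<d. \<Sum>l<d. sc (\<Delta> i j k * \<mu> j l t) (la k (lc m l))))
   \<and> (\<forall>i<d. \<forall>t<d. \<forall>m. lc (ra m i) t = (\<Sum>j<d. \<Sum>k<d. \<Sum>l<d. sc (\<Delta> i j k * \<mu> l j t) (ra (lc m l) k)))
   \<and> (\<forall>i<d. \<forall>t<d. \<forall>m. rc (la i m) t = (\<Sum>j<d. \<Sum>k<d. \<Sum>l<d. sc (\<Delta> i j k * \<mu> k l t) (la j (rc m l))))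
   \<and> (\<forall>i<d. \<forall>t<d. \<forall>m. rc (ra m i) t = (\<Sum>j<d. \<Sum>k<d. \<Sum>l<d. sc (\<Delta> i j k * \<mu> l k t) (ra (rc m l) j))))"

definition idx :: "nat \<Rightarrow> nat \<Rightarrow> nat list set" where
  "idx d p = {xs. length xs = p \<and> set xs \<subseteq> {..<d}}"

text \<open>coefficient of b_js in Delta^(u)(b_i), u = length js - 1 (Delta^(-1) = eps, Delta^(0) = id)\<close>
fun itc :: "'k::field hopf \<Rightarrow> nat \<Rightarrow> nat list \<Rightarrow> 'k" where
  "itc H i [] = heps H i"
| "itc H i [j] = kdelta i j"
| "itc H i (j # k # js) = (\<Sum>l<hdim H. hcmu H i j l * itc H l (k # js))"

text \<open>coefficient of b_t in the product b_(ls!0) ... b_(ls!(n-1)) (empty product = 1)\<close>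
fun prodc :: "'k::field hopf \<Rightarrow> nat list \<Rightarrow> nat \<Rightarrow> 'k" where
  "prodc H [] t = heta H t"
| "prodc H (l # ls) t = (\<Sum>s<hdim H. hmu H l s t * prodc H ls s)"

text \<open>coefficient of b_es in the componentwise product b_xs b_ys in A^(x)p\<close>
definition mulc :: "'k::field hopf \<Rightarrow> nat list \<Rightarrow> nat list \<Rightarrow> nat list \<Rightarrow> 'k" where
  "mulc H xs ys es = (\<Prod>r<length es. hmu H (xs ! r) (ys ! r) (es ! r))"

text \<open>coefficient of b_js (x) b_ks in b_as^(1) (x) b_as^(2) (Delta applied factorwise)\<close>
definition dcop :: "'k::field hopf \<Rightarrow> nat list \<Rightarrow> nat list \<Rightarrow> nat list \<Rightarrow> 'k" where
  "dcop H as js ks = (\<Prod>r<length as. hcmu H (as ! r) (js ! r) (ks ! r))"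

text \<open>diagonal left action of b_i on A^(x)p (x) N, and diagonal right action\<close>
definition dla :: "'k::field hopf \<Rightarrow> ('k, 'n::ab_group_add) hbimod \<Rightarrow> nat \<Rightarrow> (nat list \<Rightarrow> 'n) \<Rightarrow> nat list \<Rightarrow> 'n" where
  "dla H N i X es = (\<Sum>js\<in>idx (hdim H) (length es + 1). \<Sum>fs\<in>idx (hdim H) (length es).
      hb_sc N (itc H i js * mulc H (butlast js) fs es) (hb_la N (last js) (X fs)))"

definition dra :: "'k::field hopf \<Rightarrow> ('k, 'n::ab_group_add) hbimod \<Rightarrow> (nat list \<Rightarrow> 'n) \<Rightarrow> nat \<Rightarrow> nat list \<Rightarrow> 'n" where
  "dra H N X i es = (\<Sum>js\<in>idx (hdim H) (length es + 1). \<Sum>fs\<in>idx (hdim H) (length es).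
      hb_sc N (itc H i js * mulc H fs (butlast js) es) (hb_ra N (X fs) (last js)))"

text \<open>the component with q source and p target A-factors lies in Hom_{A-}^{-A}(M (x) A^q, A^p (x) N)\<close>
definition hom_comp :: "'k::field hopf \<Rightarrow> ('k, 'm::ab_group_add) hbimod \<Rightarrow> ('k, 'n::ab_group_add) hbimod
     \<Rightarrow> ('m \<Rightarrow> nat list \<Rightarrow> nat list \<Rightarrow> 'n) \<Rightarrow> nat \<Rightarrow> nat \<Rightarrow> bool" where
  "hom_comp H M N \<phi> q p \<longleftrightarrow> (let d = hdim H in
     \<forall>as\<in>idx d q. \<forall>es\<in>idx d p.
       klin (hb_sc M) (hb_sc N) (\<lambda>m. \<phi> m as es)
     \<and> (\<forall>i<d. \<forall>m. \<phi> (hb_la M i m) as es = dla H N i (\<phi> m as) es)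
     \<and> (\<forall>t<d. \<forall>m. hb_rc N (\<phi> m as es) t =
          (\<Sum>l<d. \<Sum>js\<in>idx d q. \<Sum>ks\<in>idx d q.
             hb_sc N (dcop H as js ks * prodc H (l # ks) t) (\<phi> (hb_rc M m l) js es))))"

definition is_cochain :: "'k::field hopf \<Rightarrow> ('k, 'm::ab_group_add) hbimod \<Rightarrow> ('k, 'n::ab_group_add) hbimod
     \<Rightarrow> nat \<Rightarrow> ('m \<Rightarrow> nat list \<Rightarrow> nat list \<Rightarrow> 'n) \<Rightarrow> bool" where
  "is_cochain H M N n \<phi> \<longleftrightarrow> (\<forall>t\<le>n. hom_comp H M N \<phi> (n - t) t)"

text \<open>horizontal differential d_h (evaluated at m (x) b_as, as of length q+1 \<ge> 1)\<close>
definition dh :: "'k::field hopf \<Rightarrow> ('k, 'm::ab_group_add) hbimod \<Rightarrow> ('k, 'n::ab_group_add) hbimod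
     \<Rightarrow> ('m \<Rightarrow> nat list \<Rightarrow> nat list \<Rightarrow> 'n) \<Rightarrow> 'm \<Rightarrow> nat list \<Rightarrow> nat list \<Rightarrow> 'n" where
  "dh H M N \<phi> m as es = (let d = hdim H; q = length as - 1 in
      \<phi> (hb_ra M m (hd as)) (tl as) es
    + (\<Sum>i\<in>{1..q}. hb_sc N ((-1) ^ i)
         (\<Sum>s<d. hb_sc N (hmu H (as ! (i - 1)) (as ! i) s) (\<phi> m (take (i - 1) as @ s # drop (i + 1) as) es)))
    + hb_sc N ((-1) ^ (q + 1)) (dra H N (\<phi> m (butlast as)) (last as) es))"

text \<open>vertical differential d_c (evaluated at m (x) b_as, result coefficient at b_es, es of length p+1 \<ge> 1)\<close>
definition dc :: "'k::field hopf \<Rightarrow> ('k, 'm::ab_group_add) hbimod \<Rightarrow> ('k, 'n::ab_group_add) hbimod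
     \<Rightarrow> ('m \<Rightarrow> nat list \<Rightarrow> nat list \<Rightarrow> 'n) \<Rightarrow> 'm \<Rightarrow> nat list \<Rightarrow> nat list \<Rightarrow> 'n" where
  "dc H M N \<phi> m as es = (let d = hdim H; q = length as; p = length es - 1 in
     hb_sc N ((-1) ^ q)
      ((\<Sum>l<d. \<Sum>js\<in>idx d q. \<Sum>ks\<in>idx d q.
          hb_sc N (dcop H as js ks * prodc H (l # js) (hd es)) (\<phi> (hb_lc M m l) ks (tl es)))
     + (\<Sum>i\<in>{1..p}. hb_sc N ((-1) ^ i)
          (\<Sum>s<d. hb_sc N (hcmu H s (es ! (i - 1)) (es ! i)) (\<phi> m as (take (i - 1) es @ s # drop (i + 1) es))))
     + hb_sc N ((-1) ^ (p + 1)) (hb_lc N (\<phi> m as (butlast es)) (last es))))"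

definition Dtot :: "'k::field hopf \<Rightarrow> ('k, 'm::ab_group_add) hbimod \<Rightarrow> ('k, 'n::ab_group_add) hbimod
     \<Rightarrow> ('m \<Rightarrow> nat list \<Rightarrow> nat list \<Rightarrow> 'n) \<Rightarrow> 'm \<Rightarrow> nat list \<Rightarrow> nat list \<Rightarrow> 'n" where
  "Dtot H M N \<phi> m as es =
     (if as = [] then 0 else dh H M N \<phi> m as es) + (if es = [] then 0 else dc H M N \<phi> m as es)"

definition is_cocycle :: "'k::field hopf \<Rightarrow> ('k, 'm::ab_group_add) hbimod \<Rightarrow> ('k, 'n::ab_group_add) hbimod
     \<Rightarrow> nat \<Rightarrow> ('m \<Rightarrow> nat list \<Rightarrow> nat list \<Rightarrow> 'n) \<Rightarrow> bool" where
  "is_cocycle H M N n \<phi> \<longleftrightarrow> is_cochain H M N n \<phi> \<and>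
     (\<forall>m as es. set as \<subseteq> {..<hdim H} \<and> set es \<subseteq> {..<hdim H} \<and> length as + length es = n + 1
        \<longrightarrow> Dtot H M N \<phi> m as es = 0)"

text \<open>cup product of a p-cochain f (M to L) and a q-cochain g (L to N); a (p+q)-cochain from M to N
  (set to 0 at index data not describing a basis tensor of the right degree)\<close>
definition cup :: "'k::field hopf \<Rightarrow> ('k, 'n::ab_group_add) hbimod \<Rightarrow> nat \<Rightarrow> nat
     \<Rightarrow> ('m \<Rightarrow> nat list \<Rightarrow> nat list \<Rightarrow> 'l) \<Rightarrow> ('l \<Rightarrow> nat list \<Rightarrow> nat list \<Rightarrow> 'n)
     \<Rightarrow> 'm \<Rightarrow> nat list \<Rightarrow> nat list \<Rightarrow> 'n" where
  "cup H N p q f g m as es =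
    (let d = hdim H; t = length es in
     if set as \<subseteq> {..<d} \<and> set es \<subseteq> {..<d} \<and> length as + t = p + q then
       (\<Sum>s\<in>{s. s \<le> p \<and> s \<le> t \<and> t - s \<le> q}.
          (let r = t - s; as1 = take (p - s) as; as2 = drop (p - s) as;
               es1 = take s es; es2 = drop s es in
           hb_sc N ((-1) ^ (s * (q - r)))
             (\<Sum>fs\<in>idx d s. \<Sum>js\<in>idx d (q - r). \<Sum>ks\<in>idx d (q - r). \<Sum>u<d. \<Sum>vs\<in>idx d s.
                hb_sc N (dcop H as2 js ks * prodc H js u * itc H u vs * mulc H fs vs es1)
                  (g (f m as1 fs) ks es2))))
     else 0)"

end

theory Submission
  imports Defs
begin

(* Against a 0-cochain h, the cup product degenerates to composition with h: its twisting
   factor is Delta^(s-1)(1) = 1 (x) ... (x) 1, which acts trivially on A^(x)s.  Both sides of the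
   identity are therefore h applied to the cup product of f and g, and they agree because h
   is k-linear. *)

lemma finite_idx: "finite (idx d n)"
proof -
  have "idx d n = {xs. set xs \<subseteq> {..<d} \<and> length xs = n}" by (auto simp: idx_def)
  then show ?thesis using finite_lists_length_eq[of "{..<d}" n] by simp
qed

lemma idx_Suc: "idx d (Suc n) = (\<lambda>(v, vs). v # vs) ` ({..<d} \<times> idx d n)"
proof
  show "idx d (Suc n) \<subseteq> (\<lambda>(v, vs). v # vs) ` ({..<d} \<times> idx d n)"
  proof
    fix xs assume "xs \<in> idx d (Suc n)"
    then obtain v vs where "xs = v # vs" "v < d" "vs \<in> idx d n"
      by (cases xs) (auto simp: idx_def)
    then show "xs \<in> (\<lambda>(v, vs). v # vs) ` ({..<d} \<times> idx d n)" by force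
  qed
qed (auto simp: idx_def)

lemma sum_idx_prod:
  fixes g :: "nat \<Rightarrow> nat \<Rightarrow> 'a::comm_semiring_1"
  shows "(\<Sum>vs\<in>idx d n. \<Prod>r<n. g r (vs ! r)) = (\<Prod>r<n. \<Sum>v<d. g r v)"
proof (induction n arbitrary: g)
  case 0
  have "idx d 0 = {[]}" by (auto simp: idx_def)
  then show ?case by simp
next
  case (Suc n)
  have inj: "inj_on (\<lambda>(v, vs). v # vs) ({..<d} \<times> idx d n)"
    by (auto simp: inj_on_def)
  have "(\<Sum>vs\<in>idx d (Suc n). \<Prod>r<Suc n. g r (vs ! r))
      = (\<Sum>(v, vs)\<in>{..<d} \<times> idx d n. g 0 v * (\<Prod>r<n. g (Suc r) (vs ! r)))"
    by (simp only: idx_Suc sum.reindex[OF inj] comp_def)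
       (simp add: case_prod_beta prod.lessThan_Suc_shift del: prod.lessThan_Suc)
  also have "\<dots> = (\<Sum>v<d. g 0 v) * (\<Sum>vs\<in>idx d n. \<Prod>r<n. g (Suc r) (vs ! r))"
    by (simp add: sum.cartesian_product[symmetric] sum_product)
  also have "\<dots> = (\<Prod>r<Suc n. \<Sum>v<d. g r v)"
    by (simp add: Suc.IH[of "\<lambda>r. g (Suc r)"] prod.lessThan_Suc_shift del: prod.lessThan_Suc)
  finally show ?case .
qed

lemma nth_lessThan: "set xs \<subseteq> {..<d} \<Longrightarrow> i < length xs \<Longrightarrow> xs ! i < d"
  using nth_mem by fastforce

lemma prod_kdelta:
  assumes "length fs = n" "length es = n"
  shows "(\<Prod>r<n. kdelta (fs ! r) (es ! r) :: 'k::field) = (if fs = es then 1 else 0)"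
proof (cases "fs = es")
  case False
  then obtain r where "r < n" "fs ! r \<noteq> es ! r" using assms nth_equalityI by metis
  then show ?thesis using False by (auto simp: kdelta_def intro: prod_zero)
qed (simp add: kdelta_def)

lemma klin_sum:
  assumes "klin sa sb F"
  shows "F (\<Sum>x\<in>A. G x) = (\<Sum>x\<in>A. F (G x))"
proof -
  have add: "F (x + y) = F x + F y" for x y using assms by (simp add: klin_def)
  then have "F 0 = 0" by (metis add_cancel_right_right)
  then show ?thesis by (induction A rule: infinite_finite_induct) (simp_all add: add)
qed

lemma hbimod_vector_space: "is_hbimod H M \<Longrightarrow> vector_space (hb_sc M)"
  unfolding is_hbimod_def Let_def by (rule conjunct1)

lemma cocycle_0_klin:
  assumes "is_cocycle H N P 0 h"
  shows "klin (hb_sc N) (hb_sc P) (\<lambda>x. h x [] [])"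
proof -
  have "hom_comp H N P h 0 0"
    using assms unfolding is_cocycle_def is_cochain_def by auto
  moreover have "[] \<in> idx (hdim H) 0" by (simp add: idx_def)
  ultimately show ?thesis unfolding hom_comp_def Let_def by blast
qed

lemma hopf_mult_unit_right:
  assumes "is_hopf H" "i < hdim H" "t < hdim H"
  shows "(\<Sum>k<hdim H. heta H k * hmu H i k t) = kdelta i t"
proof -
  have "\<forall>i<hdim H. \<forall>t<hdim H. (\<Sum>k<hdim H. heta H k * hmu H k i t) = kdelta i t
      \<and> (\<Sum>k<hdim H. heta H k * hmu H i k t) = kdelta i t"
    using assms(1) unfolding is_hopf_def Let_def by (elim conjE) assumption
  then show ?thesis using assms(2,3) by blast
qed

lemma hopf_comult_unit:
  assumes "is_hopf H" "a < hdim H" "b < hdim H"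
  shows "(\<Sum>k<hdim H. heta H k * hcmu H k a b) = heta H a * heta H b"
proof -
  have "\<forall>a<hdim H. \<forall>b<hdim H. (\<Sum>k<hdim H. heta H k * hcmu H k a b) = heta H a * heta H b"
    using assms(1) unfolding is_hopf_def Let_def by (elim conjE) assumption
  then show ?thesis using assms(2,3) by blast
qed

lemma hopf_counit_unit:
  assumes "is_hopf H"
  shows "(\<Sum>k<hdim H. heta H k * heps H k) = 1"
  using assms unfolding is_hopf_def Let_def by (elim conjE) assumption

lemma itc_unit:
  assumes "is_hopf H" "set vs \<subseteq> {..<hdim H}"
  shows "(\<Sum>u<hdim H. heta H u * itc H u vs) = (\<Prod>r<length vs. heta H (vs ! r))"
  using assms(2)
proof (induction vs rule: induct_list012)
  case 1
  then show ?case using hopf_counit_unit[OF assms(1)] by simp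
next
  case (2 x)
  then show ?case by (simp add: kdelta_def if_distrib cong: if_cong)
next
  case (3 x y zs)
  let ?d = "hdim H"
  have "(\<Sum>u<?d. heta H u * itc H u (x # y # zs))
      = (\<Sum>u<?d. \<Sum>l<?d. heta H u * hcmu H u x l * itc H l (y # zs))"
    by (simp add: sum_distrib_left mult.assoc)
  also have "\<dots> = (\<Sum>l<?d. (\<Sum>u<?d. heta H u * hcmu H u x l) * itc H l (y # zs))"
    by (subst sum.swap) (simp add: sum_distrib_right)
  also have "\<dots> = heta H x * (\<Sum>l<?d. heta H l * itc H l (y # zs))"
    using hopf_comult_unit[OF assms(1)] "3.prems"
    by (simp add: sum_distrib_left mult.assoc)
  also have "\<dots> = (\<Prod>r<length (x # y # zs). heta H ((x # y # zs) ! r))"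
    using 3 by (simp only: length_Cons prod.lessThan_Suc_shift nth_Cons_0 nth_Cons_Suc) simp
  finally show ?case .
qed

lemma mulc_itc_unit:
  assumes "is_hopf H" "fs \<in> idx (hdim H) n" "es \<in> idx (hdim H) n"
  shows "(\<Sum>u<hdim H. \<Sum>vs\<in>idx (hdim H) n. heta H u * itc H u vs * mulc H fs vs es)
     = (if fs = es then 1 else 0)"
proof -
  let ?d = "hdim H"
  have entries: "fs ! r < ?d" "es ! r < ?d" if "r < n" for r
    using assms(2,3) that by (auto simp: idx_def intro: nth_lessThan)
  have "(\<Sum>u<?d. \<Sum>vs\<in>idx ?d n. heta H u * itc H u vs * mulc H fs vs es)
     = (\<Sum>vs\<in>idx ?d n. (\<Sum>u<?d. heta H u * itc H u vs) * mulc H fs vs es)"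
    by (subst sum.swap) (simp add: sum_distrib_right)
  also have "\<dots> = (\<Sum>vs\<in>idx ?d n. \<Prod>r<n. heta H (vs ! r) * hmu H (fs ! r) (vs ! r) (es ! r))"
    using assms itc_unit[OF assms(1)]
    by (intro sum.cong) (auto simp: idx_def mulc_def prod.distrib)
  also have "\<dots> = (\<Prod>r<n. \<Sum>v<?d. heta H v * hmu H (fs ! r) v (es ! r))"
    by (rule sum_idx_prod)
  also have "\<dots> = (\<Prod>r<n. kdelta (fs ! r) (es ! r))"
    using entries by (intro prod.cong refl hopf_mult_unit_right[OF assms(1)]) auto
  also have "\<dots> = (if fs = es then 1 else 0)"
    using assms by (intro prod_kdelta) (auto simp: idx_def)
  finally show ?thesis .
qed

lemma cup_outside_domain:
  assumes "\<not> (set as \<subseteq> {..<hdim H} \<and> set es \<subseteq> {..<hdim H} \<and> length as + length es = p + q)"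
  shows "cup H N p q f g m as es = 0"
  using assms unfolding cup_def Let_def by (rule if_not_P)

lemma cup_0_right:
  assumes "is_hopf H" "is_hbimod H P"
  shows "cup H P n 0 F h m as es =
    (if set as \<subseteq> {..<hdim H} \<and> set es \<subseteq> {..<hdim H} \<and> length as + length es = n
     then h (F m as es) [] [] else 0)"
proof (cases "set as \<subseteq> {..<hdim H} \<and> set es \<subseteq> {..<hdim H} \<and> length as + length es = n")
  case True
  interpret vector_space "hb_sc P" using hbimod_vector_space[OF assms(2)] .
  let ?d = "hdim H" and ?t = "length es"
  have es: "es \<in> idx ?d ?t" using True by (simp add: idx_def)
  have "{s. s \<le> n \<and> s \<le> ?t \<and> ?t - s \<le> 0} = {?t}" using True by auto
  moreover have "idx ?d 0 = {[]}" by (auto simp: idx_def)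
  moreover have "take (n - ?t) as = as" "drop (n - ?t) as = []" using True by auto
  ultimately have "cup H P n 0 F h m as es =
     (\<Sum>fs\<in>idx ?d ?t. \<Sum>u<?d. \<Sum>vs\<in>idx ?d ?t.
        hb_sc P (heta H u * itc H u vs * mulc H fs vs es) (h (F m as fs) [] []))"
    using True by (simp add: cup_def dcop_def Let_def)
  also have "\<dots> = (\<Sum>fs\<in>idx ?d ?t. hb_sc P (if fs = es then 1 else 0) (h (F m as fs) [] []))"
    using mulc_itc_unit[OF assms(1) _ es] by (simp add: scale_sum_left[symmetric])
  also have "\<dots> = (\<Sum>fs\<in>idx ?d ?t. if fs = es then h (F m as fs) [] [] else 0)"
    by (intro sum.cong refl) simp
  also have "\<dots> = h (F m as es) [] []"
    using es by (simp add: sum.delta finite_idx)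
  finally show ?thesis using True by simp
next
  case False
  then have "cup H P n 0 F h m as es = 0"
    by (rule cup_outside_domain[where q = 0, unfolded add_0_right])
  then show ?thesis by (simp only: if_not_P[OF False])
qed

lemma cup_cong_right:
  assumes "\<And>l ks es. set ks \<subseteq> {..<hdim H} \<Longrightarrow> set es \<subseteq> {..<hdim H} \<Longrightarrow>
      length ks + length es = q \<Longrightarrow> G l ks es = G' l ks es"
  shows "cup H P p q f G = cup H P p q f G'"
  unfolding cup_def Let_def
  by (intro ext if_cong refl sum.cong arg_cong2[where f = "hb_sc P"] assms)
     (auto simp: idx_def dest: in_set_dropD)

lemma klin_cup:
  assumes "klin (hb_sc N) (hb_sc P) \<phi>"
  shows "\<phi> (cup H N p q f g m as es) = cup H P p q f (\<lambda>l ks es. \<phi> (g l ks es)) m as es"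
proof -
  have "\<phi> 0 = 0" using klin_sum[OF assms, of "\<lambda>x. x" "{}"] by simp
  moreover have "\<phi> (hb_sc N c x) = hb_sc P c (\<phi> x)" for c x
    using assms by (simp add: klin_def)
  ultimately show ?thesis
    by (simp add: cup_def Let_def klin_sum[OF assms])
qed

theorem mainTheorem5:
  fixes H :: "'k::field hopf"
    and M :: "('k, 'm::ab_group_add) hbimod" and L :: "('k, 'l::ab_group_add) hbimod"
    and N :: "('k, 'n::ab_group_add) hbimod" and P :: "('k, 'p::ab_group_add) hbimod"
    and f :: "'m \<Rightarrow> nat list \<Rightarrow> nat list \<Rightarrow> 'l"
    and g :: "'l \<Rightarrow> nat list \<Rightarrow> nat list \<Rightarrow> 'n"
    and h :: "'n \<Rightarrow> nat list \<Rightarrow> nat list \<Rightarrow> 'p"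
    and p q :: nat
  assumes "is_hopf H"
    and "is_hbimod H M" and "is_hbimod H L" and "is_hbimod H N" and "is_hbimod H P"
    and "is_cocycle H M L p f" and "is_cocycle H L N q g" and "is_cocycle H N P 0 h"
  shows "cup H P (p + q) 0 (cup H N p q f g) h = cup H P p q f (cup H P q 0 g h)"
proof (intro ext)
  fix m as es
  have h_lin: "klin (hb_sc N) (hb_sc P) (\<lambda>x. h x [] [])"
    using cocycle_0_klin[OF assms(8)] .
  have gh: "cup H P p q f (cup H P q 0 g h) = cup H P p q f (\<lambda>l ks es. h (g l ks es) [] [])"
    by (rule cup_cong_right) (simp add: cup_0_right[OF assms(1,5)])
  show "cup H P (p + q) 0 (cup H N p q f g) h m as es = cup H P p q f (cup H P q 0 g h) m as es"
  proof (cases "set as \<subseteq> {..<hdim H} \<and> set es \<subseteq> {..<hdim H} \<and> length as + length es = p + q")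
    case True
    then show ?thesis by (simp add: cup_0_right[OF assms(1,5)] gh klin_cup[OF h_lin])
  next
    case False
    then have "cup H P (p + q) 0 (cup H N p q f g) h m as es = 0"
      by (rule cup_outside_domain[where q = 0, unfolded add_0_right])
    moreover have "cup H P p q f (cup H P q 0 g h) m as es = 0"
      using False by (rule cup_outside_domain)
    ultimately show ?thesis by simp
  qed
qed

end
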